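(* Let $t\in\mathbb{R}\setminus\{0\}$, $\varepsilon\in(0,\frac1e)$ and $R:=\left\lfloor r\!\left(\frac{e|t|}{2},\frac54\varepsilon\right)/2\right\rfloor$. Then $$\sup_{x\in[-1,1]}\left|\cos(tx)-\Big(J_0(t)+2\sum_{k=1}^R(-1)^kJ_{2k}(t)T_{2k}(x)\Big)\right|\le\varepsilon,\qquad \sup_{x\in[-1,1]}\left|\sin(tx)-2\sum_{k=0}^R(-1)^kJ_{2k+1}(t)T_{2k+1}(x)\right|\le\varepsilon.$$
   Context: $J_m$ denotes the Bessel function of the first kind of order $m$; $T_m(x)=\cos(m\arccos x)$ the Chebyshev polynomial of the first kind. For $\tau>0$ and $\eta\in(0,1)$, $r(\tau,\eta)$ denotes the unique solution $r\in(\tau,\infty)$ of $\eta=(\tau/r)^r$. *)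

theory Defs
  imports "HOL-Analysis.Analysis"
begin

definition bessel_J :: "nat \<Rightarrow> real \<Rightarrow> real" where
  "bessel_J m t = (\<Sum>k. (-1) ^ k / (fact k * fact (k + m)) * (t / 2) ^ (2 * k + m))"

definition cheb_T :: "nat \<Rightarrow> real \<Rightarrow> real" where
  "cheb_T m x = cos (real m * arccos x)"

definition r_fun :: "real \<Rightarrow> real \<Rightarrow> real" where
  "r_fun \<tau> \<eta> = (THE r. \<tau> < r \<and> \<eta> = (\<tau> / r) powr r)"

end

theory Submission
  imports Defs
begin

text \<open>
  Put x = cos \<theta>. Expanding the Taylor series of cos (t x) and sin (t x) with
  (2 cos \<theta>)^n = \<Sum>k. (n choose k) cos ((n - 2k) \<theta>) and summing the absolutely convergent
  double series along the other index gives the Jacobi--Anger expansions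
  cos (t x) = \<Sum>j. \<epsilon>(2j) (-1)^j J(2j, t) T(2j, x) and sin (t x) = 2 \<Sum>j. (-1)^j J(2j+1, t) T(2j+1, x),
  with the Neumann factor \<epsilon>(m) = 1 for m = 0 and 2 otherwise.
  Since |T(m, x)| \<le> 1, the truncation error is bounded by the tail of 2 |J(m, t)|, and
  |J(m, t)| \<le> (|t|/2)^m / m! follows from J(0)^2 + J(1)^2 \<le> 1 and (s^(m+1) J(m+1, s))' = s^(m+1) J(m, s).
  With m! \<ge> (e^2/2) (m/e)^m and \<tau> = e |t| / 2 this is at most (2/e^2) (\<tau>/m)^m. As
  x \<mapsto> x ln (\<tau>/x) decreases with slope at most -1 beyond \<tau>, the term of order m \<ge> r + 2j is at
  most (2/e^2) (5\<epsilon>/4) e^(-2j), and the geometric tail sums to 5\<epsilon> / (e^2 - 1) \<le> \<epsilon>.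
\<close>

section \<open>Bessel functions of integer order\<close>

lemma has_real_derivative_sparse_power_series:
  fixes c :: "nat \<Rightarrow> real" and e :: "nat \<Rightarrow> nat"
  assumes abs_summable: "\<And>y. 0 \<le> y \<Longrightarrow> summable (\<lambda>k. \<bar>c k\<bar> * y ^ e k)"
  shows "((\<lambda>x. \<Sum>k. c k * x ^ e k) has_real_derivative (\<Sum>k. c k * e k * x ^ (e k - 1))) (at x)"
proof -
  define K where "K = \<bar>x\<bar> + 1"
  have K: "1 \<le> K" "x \<in> {-K..K}" "x \<in> interior {-K..K}" by (auto simp: K_def)
  have deriv_term_bound: "norm (c k * e k * z ^ (e k - 1)) \<le> \<bar>c k\<bar> * (2 * K) ^ e k"
    if "z \<in> {-K..K}" for k z
  proof -
    have "\<bar>z\<bar> ^ (e k - 1) \<le> K ^ (e k - 1)" using that by (intro power_mono) auto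
    also have "\<dots> \<le> K ^ e k" using K by (intro power_increasing) auto
    finally have power_le: "\<bar>z\<bar> ^ (e k - 1) \<le> K ^ e k" .
    have exponent_le: "real (e k) \<le> 2 ^ e k"
      using of_nat_less_two_power[of "e k", where 'a = real] by linarith
    have "real (e k) * \<bar>z\<bar> ^ (e k - 1) \<le> 2 ^ e k * K ^ e k"
      by (rule mult_mono[OF exponent_le power_le]) auto
    then have "\<bar>c k\<bar> * (real (e k) * \<bar>z\<bar> ^ (e k - 1)) \<le> \<bar>c k\<bar> * (2 * K) ^ e k"
      unfolding power_mult_distrib by (rule mult_left_mono) simp
    then show ?thesis by (simp add: abs_mult power_abs mult.assoc)
  qed
  have "summable (\<lambda>k. norm (c k * x ^ e k))"
    using abs_summable[of "\<bar>x\<bar>"] by (simp add: abs_mult power_abs)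
  then have summable_values: "summable (\<lambda>k. c k * x ^ e k)"
    by (rule summable_norm_cancel)
  have summable_majorant: "summable (\<lambda>k. \<bar>c k\<bar> * (2 * K) ^ e k)"
    using K(1) by (intro abs_summable[of "2 * K"]) simp
  have "uniformly_convergent_on {-K..K} (\<lambda>n x. \<Sum>k<n. c k * e k * x ^ (e k - 1))"
    using deriv_term_bound by (intro Weierstrass_m_test'[OF _ summable_majorant]) auto
  moreover have "((\<lambda>x. c k * x ^ e k) has_real_derivative c k * e k * z ^ (e k - 1)) (at z within {-K..K})"
    for k z by (auto intro!: derivative_eq_intros)
  ultimately show ?thesis
    using has_field_derivative_series'(2)[of "{-K..K}" "\<lambda>k x. c k * x ^ e k"
        "\<lambda>k x. c k * e k * x ^ (e k - 1)" x x] K summable_values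
    by simp
qed

definition bessel_coeff :: "nat \<Rightarrow> nat \<Rightarrow> real" where
  "bessel_coeff m k = (-1) ^ k / (fact k * fact (k + m) * 2 ^ (2 * k + m))"

lemma bessel_J_eq_series: "bessel_J m t = (\<Sum>k. bessel_coeff m k * t ^ (2 * k + m))"
  unfolding bessel_J_def bessel_coeff_def by (simp add: power_divide)

lemma abs_bessel_coeff_le: "\<bar>bessel_coeff m k\<bar> \<le> inverse (fact k)"
proof -
  have "1 * 1 \<le> fact (k + m) * (2::real) ^ (2 * k + m)"
    by (intro mult_mono) auto
  then have "inverse (fact (k + m) * (2::real) ^ (2 * k + m)) \<le> 1"
    by (intro inverse_le_1_iff[THEN iffD2]) simp
  then have "inverse (fact k) * inverse (fact (k + m) * (2::real) ^ (2 * k + m)) \<le> inverse (fact k) * 1"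
    by (intro mult_left_mono) auto
  then show ?thesis
    by (simp add: bessel_coeff_def abs_mult divide_inverse mult_ac)
qed

lemma summable_bessel_coeff_abs:
  assumes "0 \<le> y" shows "summable (\<lambda>k. \<bar>bessel_coeff m k\<bar> * y ^ (2 * k + m))"
proof (rule summable_comparison_test)
  show "summable (\<lambda>k. inverse (fact k) * (y\<^sup>2) ^ k * y ^ m)"
    by (intro summable_mult2 summable_exp)
  have "\<bar>bessel_coeff m k\<bar> * y ^ (2 * k + m) \<le> inverse (fact k) * (y\<^sup>2) ^ k * y ^ m" for k
    using assms abs_bessel_coeff_le[of m k]
    by (simp add: power_add power_mult mult.assoc mult_right_mono)
  then show "\<exists>N. \<forall>k\<ge>N. norm (\<bar>bessel_coeff m k\<bar> * y ^ (2 * k + m)) \<le> inverse (fact k) * (y\<^sup>2) ^ k * y ^ m"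
    using assms by auto
qed

lemma summable_bessel_series: "summable (\<lambda>k. bessel_coeff m k * t ^ (2 * k + m))"
proof (rule summable_norm_cancel)
  show "summable (\<lambda>k. norm (bessel_coeff m k * t ^ (2 * k + m)))"
    using summable_bessel_coeff_abs[of "\<bar>t\<bar>" m] by (simp add: abs_mult power_abs)
qed

lemma bessel_J_differentiable: "bessel_J m differentiable (at t)"
  using has_real_derivative_sparse_power_series[of "bessel_coeff m" "\<lambda>k. 2 * k + m", OF summable_bessel_coeff_abs]
  unfolding bessel_J_eq_series[abs_def] real_differentiable_def by blast

lemma bessel_coeff_Suc_order: "bessel_coeff (Suc m) k * (2 * k + 2 * m + 2) = bessel_coeff m k"
proof -
  have cancel: "x / (a * (d * F) * (2 * P)) * (2 * d) = x / (a * F * P)" if "d \<noteq> 0" for x a d F P :: real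
    using that by (cases "a = 0 \<or> F = 0 \<or> P = 0") (auto simp: field_simps)
  show ?thesis
    using cancel[of "real k + real m + 1" "(-1) ^ k" "fact k" "fact (k + m)" "2 ^ (2 * k + m)"]
    by (simp add: bessel_coeff_def algebra_simps)
qed

lemma bessel_coeff_0_Suc: "bessel_coeff 0 (Suc k) * (2 * k + 2) = - bessel_coeff 1 k"
proof -
  have cancel: "- x / (d * F * (d * F) * (2 * P)) * (2 * d) = - (x / (F * (d * F) * P))" if "d \<noteq> 0" for x d F P :: real
    using that by (cases "F = 0 \<or> P = 0") (auto simp: field_simps)
  show ?thesis
    using cancel[of "real k + 1" "(-1) ^ k" "fact k" "2 ^ (2 * k + 1)"]
    by (simp add: bessel_coeff_def algebra_simps)
qed

lemma has_real_derivative_power_mult_bessel_J: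
  "((\<lambda>s. s ^ Suc m * bessel_J (Suc m) s) has_real_derivative t ^ Suc m * bessel_J m t) (at t)"
proof -
  have shift: "s ^ Suc m * (a * s ^ e) = a * s ^ (e + Suc m)" for s a :: real and e
    by (simp add: power_add)
  have exponent: "2 * k + Suc m + Suc m = 2 * k + 2 * m + 2" "2 * k + 2 * m + 2 - 1 = 2 * k + m + Suc m" for k
    by simp_all
  have product_series: "(\<lambda>s. s ^ Suc m * bessel_J (Suc m) s) = (\<lambda>s. \<Sum>k. bessel_coeff (Suc m) k * s ^ (2 * k + 2 * m + 2))"
    unfolding bessel_J_eq_series suminf_mult[OF summable_bessel_series, symmetric] shift exponent ..
  have abs_summable: "summable (\<lambda>k. \<bar>bessel_coeff (Suc m) k\<bar> * y ^ (2 * k + 2 * m + 2))" if "0 \<le> y" for y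
    using summable_mult[OF summable_bessel_coeff_abs[OF that], of "y ^ Suc m" "Suc m"]
    unfolding shift exponent .
  have derivative: "(\<Sum>k. bessel_coeff (Suc m) k * real (2 * k + 2 * m + 2) * t ^ (2 * k + 2 * m + 2 - 1))
      = t ^ Suc m * bessel_J m t"
    unfolding bessel_J_eq_series suminf_mult[OF summable_bessel_series, symmetric] shift exponent
    by (simp only: bessel_coeff_Suc_order)
  show ?thesis
    unfolding product_series derivative[symmetric]
    by (rule has_real_derivative_sparse_power_series) (rule abs_summable)
qed

lemma bessel_J0_has_derivative: "(bessel_J 0 has_real_derivative - bessel_J 1 t) (at t)"
proof -
  have tail_series: "bessel_J 0 = (\<lambda>s. 1 + (\<Sum>k. bessel_coeff 0 (Suc k) * s ^ (2 * k + 2)))"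
    using suminf_split_head[OF summable_bessel_series[of 0]]
    by (auto simp: bessel_J_eq_series bessel_coeff_def)
  have abs_summable: "summable (\<lambda>k. \<bar>bessel_coeff 0 (Suc k)\<bar> * y ^ (2 * k + 2))" if "0 \<le> y" for y
    using summable_Suc_iff[THEN iffD2, OF summable_bessel_coeff_abs[OF that, of 0]] by simp
  have derivative: "(\<Sum>k. bessel_coeff 0 (Suc k) * real (2 * k + 2) * t ^ (2 * k + 2 - 1)) = - bessel_J 1 t"
  proof -
    have "2 * k + 2 - 1 = 2 * k + 1" for k :: nat by simp
    then show ?thesis
      unfolding bessel_J_eq_series suminf_minus[OF summable_bessel_series, symmetric]
      by (simp only: bessel_coeff_0_Suc mult_minus_left)
  qed
  show ?thesis
    unfolding tail_series derivative[symmetric]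
    using DERIV_add[OF DERIV_const has_real_derivative_sparse_power_series[OF abs_summable]]
    by simp
qed

lemma bessel_J_at_0: "bessel_J 0 0 = 1" "bessel_J (Suc m) 0 = 0"
proof -
  have "(\<lambda>k. bessel_coeff 0 k * 0 ^ (2 * k + 0)) = (\<lambda>k. if k = 0 then 1 else 0)"
    by (auto simp: bessel_coeff_def)
  then show "bessel_J 0 0 = 1"
    using sums_single[of 0 "\<lambda>_. 1 :: real"] by (simp add: bessel_J_eq_series sums_iff)
  show "bessel_J (Suc m) 0 = 0"
    by (simp add: bessel_J_eq_series)
qed

lemma bessel_J_minus: "bessel_J m (- t) = (-1) ^ m * bessel_J m t"
proof -
  have "(\<lambda>k. bessel_coeff m k * (- t) ^ (2 * k + m)) = (\<lambda>k. (-1) ^ m * (bessel_coeff m k * t ^ (2 * k + m)))"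
    by (simp add: power_add power_minus[of t m] mult_ac)
  then show ?thesis
    unfolding bessel_J_eq_series suminf_mult[OF summable_bessel_series, symmetric] by (rule arg_cong)
qed

lemma abs_le_by_derivative_comparison:
  fixes f g f' g' :: "real \<Rightarrow> real"
  assumes "0 \<le> t" and "\<bar>f 0\<bar> \<le> g 0"
    and f: "\<And>s. (f has_real_derivative f' s) (at s)"
    and g: "\<And>s. (g has_real_derivative g' s) (at s)"
    and derivative_le: "\<And>s. 0 \<le> s \<Longrightarrow> s \<le> t \<Longrightarrow> \<bar>f' s\<bar> \<le> g' s"
  shows "\<bar>f t\<bar> \<le> g t"
proof -
  have "g 0 - f 0 \<le> g t - f t"
    using DERIV_nonneg_imp_nondecreasing[of 0 t "\<lambda>s. g s - f s"] assms(1)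
      DERIV_diff[OF g f] derivative_le by fastforce
  moreover have "g 0 + f 0 \<le> g t + f t"
    using DERIV_nonneg_imp_nondecreasing[of 0 t "\<lambda>s. g s + f s"] assms(1)
      DERIV_add[OF g f] derivative_le by fastforce
  ultimately show ?thesis
    using assms(2) by linarith
qed

lemma bessel_J0_sq_add_bessel_J1_sq_le:
  assumes "0 \<le> t" shows "(bessel_J 0 t)\<^sup>2 + (bessel_J 1 t)\<^sup>2 \<le> 1"
proof -
  define J1' where "J1' = deriv (bessel_J 1)"
  have J1': "(bessel_J 1 has_real_derivative J1' s) (at s)" for s
    unfolding J1'_def using bessel_J_differentiable DERIV_deriv_iff_real_differentiable by blast
  have recurrence: "s * (J1' s - bessel_J 0 s) = - bessel_J 1 s" for s
  proof -
    have "((\<lambda>s. s * bessel_J 1 s) has_real_derivative s * bessel_J 0 s) (at s)"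
      using has_real_derivative_power_mult_bessel_J[of 0 s] by simp
    from DERIV_unique[OF DERIV_mult[OF DERIV_ident J1'] this] show ?thesis
      by (simp add: algebra_simps)
  qed
  \<comment> \<open>By the recurrence, s E'(s) = -2 J(1, s)^2, so E is nonincreasing on [0, \<infinity>).\<close>
  define E where "E s = (bessel_J 0 s)\<^sup>2 + (bessel_J 1 s)\<^sup>2" for s
  have E': "(E has_real_derivative 2 * bessel_J 1 s * (J1' s - bessel_J 0 s)) (at s)" for s
    unfolding E_def[abs_def]
    by (rule derivative_eq_intros bessel_J0_has_derivative J1' refl)+ (simp add: algebra_simps)
  have "2 * bessel_J 1 s * (J1' s - bessel_J 0 s) \<le> 0" if "0 \<le> s" for s
  proof (cases "s = 0")
    case True
    then show ?thesis by (simp add: bessel_J_at_0)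
  next
    case False
    have "s * (2 * bessel_J 1 s * (J1' s - bessel_J 0 s)) = 2 * bessel_J 1 s * (s * (J1' s - bessel_J 0 s))"
      by (simp only: mult_ac)
    also have "\<dots> = - 2 * (bessel_J 1 s)\<^sup>2"
      unfolding recurrence by (simp add: power2_eq_square)
    also have "\<dots> \<le> 0"
      by (rule mult_nonpos_nonneg) simp_all
    finally have "s * (2 * bessel_J 1 s * (J1' s - bessel_J 0 s)) \<le> 0" .
    moreover have "0 < s"
      using False that by simp
    ultimately show ?thesis
      by (simp add: mult_le_0_iff)
  qed
  then have "E t \<le> E 0"
    using DERIV_nonpos_imp_nonincreasing[of 0 t E] E' assms by blast
  then show ?thesis
    by (simp add: E_def bessel_J_at_0)
qed

lemma abs_bessel_J0_le_1: "\<bar>bessel_J 0 t\<bar> \<le> 1"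
proof -
  have "\<bar>bessel_J 0 s\<bar> \<le> 1" if "0 \<le> s" for s
    using bessel_J0_sq_add_bessel_J1_sq_le[OF that] abs_square_le_1[of "bessel_J 0 s"]
      zero_le_power2[of "bessel_J 1 s"] by linarith
  from this[of t] this[of "- t"] show ?thesis
    by (cases "0 \<le> t") (simp_all add: bessel_J_minus)
qed

lemma abs_power_mult_bessel_J_Suc_le:
  assumes "0 \<le> t" and IH: "\<And>s. 0 \<le> s \<Longrightarrow> \<bar>bessel_J m s\<bar> \<le> (s / 2) ^ m / fact m"
  shows "\<bar>t ^ Suc m * bessel_J (Suc m) t\<bar> \<le> t ^ Suc m * ((t / 2) ^ Suc m / fact (Suc m))"
proof -
  define c :: real where "c = 2 ^ Suc m * fact (Suc m)"
  have slope: "real (2 * m + 2) / c = 1 / (2 ^ m * fact m)"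
  proof -
    have "x * d / (2 * y * (d * z)) = x / (2 * y * z)" if "d \<noteq> 0" for x d y z :: real
      using that by simp
    from this[of "real m + 1" 2 "2 ^ m" "fact m"] show ?thesis
      by (simp add: c_def algebra_simps)
  qed
  have derivative_bound: "\<bar>s ^ Suc m * bessel_J m s\<bar> \<le> real (2 * m + 2) * s ^ (2 * m + 1) / c"
    if "0 \<le> s" for s
  proof -
    have "\<bar>s ^ Suc m * bessel_J m s\<bar> = s ^ Suc m * \<bar>bessel_J m s\<bar>"
      using that by (simp add: abs_mult)
    also have "\<dots> \<le> s ^ Suc m * ((s / 2) ^ m / fact m)"
      using that by (intro mult_left_mono IH) auto
    also have "\<dots> = s ^ (2 * m + 1) / (2 ^ m * fact m)"
      by (simp add: power_divide power_add[symmetric] mult_2)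
    also have "\<dots> = real (2 * m + 2) * s ^ (2 * m + 1) / c"
      using slope by (metis times_divide_eq_left mult.commute divide_divide_eq_left mult_1)
    finally show ?thesis .
  qed
  have power_derivative: "((\<lambda>s. s ^ (2 * m + 2) / c) has_real_derivative real (2 * m + 2) * s ^ (2 * m + 1) / c) (at s)" for s
    using DERIV_cdivide[OF DERIV_pow[of "2 * m + 2" s UNIV], where c = c] by simp
  have "\<bar>t ^ Suc m * bessel_J (Suc m) t\<bar> \<le> t ^ (2 * m + 2) / c"
    by (rule abs_le_by_derivative_comparison[OF assms(1) _ has_real_derivative_power_mult_bessel_J
          power_derivative derivative_bound]) (simp add: bessel_J_at_0)
  also have "t ^ (2 * m + 2) = t ^ Suc m * t ^ Suc m"
    by (simp flip: power_add add: mult_2)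
  finally show ?thesis
    by (simp add: c_def power_divide)
qed

lemma abs_bessel_J_le_nonneg:
  assumes "0 \<le> t" shows "\<bar>bessel_J m t\<bar> \<le> (t / 2) ^ m / fact m"
  using assms
proof (induction m arbitrary: t)
  case 0
  then show ?case using abs_bessel_J0_le_1 by simp
next
  case (Suc m)
  have "t ^ Suc m * \<bar>bessel_J (Suc m) t\<bar> \<le> t ^ Suc m * ((t / 2) ^ Suc m / fact (Suc m))"
    using abs_power_mult_bessel_J_Suc_le[OF Suc.prems Suc.IH] Suc.prems by (simp add: abs_mult)
  moreover have "0 < t ^ Suc m" if "t \<noteq> 0"
    using that Suc.prems by simp
  ultimately show ?case
    by (cases "t = 0") (auto simp: bessel_J_at_0 intro: mult_left_le_imp_le)
qed

lemma abs_bessel_J_le: "\<bar>bessel_J m t\<bar> \<le> (\<bar>t\<bar> / 2) ^ m / fact m"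
  using abs_bessel_J_le_nonneg[of t m] abs_bessel_J_le_nonneg[of "- t" m]
  by (cases "0 \<le> t") (simp_all add: bessel_J_minus abs_mult)

section \<open>The Jacobi--Anger expansion\<close>

lemma two_cos_power:
  "(2 * cos \<theta>) ^ N = (\<Sum>k\<le>N. real (N choose k) * cos ((real N - 2 * real k) * \<theta>))"
proof -
  have "complex_of_real ((2 * cos \<theta>) ^ N) = (cis (- \<theta>) + cis \<theta>) ^ N"
    by (simp add: complex_eq_iff)
  also have "\<dots> = (\<Sum>k\<le>N. of_nat (N choose k) * cis (- \<theta>) ^ k * cis \<theta> ^ (N - k))"
    by (rule binomial_ring)
  also have "\<dots> = (\<Sum>k\<le>N. of_nat (N choose k) * cis ((real N - 2 * real k) * \<theta>))"
  proof (rule sum.cong[OF refl])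
    fix k assume "k \<in> {..N}"
    then have "real k * - \<theta> + real (N - k) * \<theta> = (real N - 2 * real k) * \<theta>"
      by (simp add: of_nat_diff algebra_simps)
    then have "cis (- \<theta>) ^ k * cis \<theta> ^ (N - k) = cis ((real N - 2 * real k) * \<theta>)"
      by (simp add: Complex.DeMoivre cis_mult)
    then show "of_nat (N choose k) * cis (- \<theta>) ^ k * cis \<theta> ^ (N - k)
        = of_nat (N choose k) * cis ((real N - 2 * real k) * \<theta>)"
      by (simp only: mult.assoc)
  qed
  finally have "Re (complex_of_real ((2 * cos \<theta>) ^ N))
      = Re (\<Sum>k\<le>N. of_nat (N choose k) * cis ((real N - 2 * real k) * \<theta>))"
    by (rule arg_cong)
  then show ?thesis
    by simp
qed

lemma sum_atMost_symmetric_fold: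
  fixes f :: "nat \<Rightarrow> 'a::comm_ring_1"
  assumes "\<And>k. k \<le> N \<Longrightarrow> f (N - k) = f k"
  shows "(\<Sum>k\<le>N. f k) = (\<Sum>k\<le>N div 2. (if 2 * k = N then 1 else 2) * f k)"
  using assms
proof (induction N arbitrary: f rule: less_induct)
  case (less N)
  show ?case
  proof (cases "N < 2")
    case True
    then consider "N = 0" | "N = 1" by linarith
    then show ?thesis
    proof cases
      case 2
      then have "f 1 = f 0" using less.prems[of 0] by simp
      then show ?thesis using 2 by (simp flip: mult_2)
    qed simp
  next
    case False
    then obtain M where N: "N = Suc (Suc M)" by (metis add_2_eq_Suc le_Suc_ex not_less)
    have "(\<Sum>k\<le>M. f (Suc k)) = (\<Sum>k\<le>M div 2. (if 2 * k = M then 1 else 2) * f (Suc k))"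
    proof (rule less.IH)
      show "M < N" by (simp add: N)
      show "f (Suc (M - k)) = f (Suc k)" if "k \<le> M" for k
        using less.prems[of "Suc k"] that by (simp add: N Suc_diff_le)
    qed
    moreover have "(\<Sum>k\<le>N. f k) = f 0 + (\<Sum>k\<le>M. f (Suc k)) + f N"
      unfolding N sum.atMost_Suc[of f "Suc M"] sum.atMost_Suc_shift[of f M] ..
    moreover have "f N = f 0"
      using less.prems[of N] by simp
    moreover have "(\<Sum>k\<le>N div 2. (if 2 * k = N then 1 else 2) * f k)
        = 2 * f 0 + (\<Sum>k\<le>M div 2. (if 2 * k = M then 1 else 2) * f (Suc k))"
    proof -
      have "N div 2 = Suc (M div 2)" by (simp add: N)
      then show ?thesis
        by (simp only: sum.atMost_Suc_shift) (simp add: N del: sum.atMost_Suc)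
    qed
    ultimately show ?thesis
      by (simp flip: mult_2)
  qed
qed

definition neumann_factor :: "nat \<Rightarrow> real" where
  "neumann_factor m = (if m = 0 then 1 else 2)"

lemma two_cos_power_fold:
  assumes "p \<le> 1"
  shows "(2 * cos \<theta>) ^ (2 * n + p)
    = (\<Sum>j\<le>n. neumann_factor (2 * j + p) * real ((2 * n + p) choose (n - j)) * cos (real (2 * j + p) * \<theta>))"
proof -
  define N where "N = 2 * n + p"
  define f where "f k = real (N choose k) * cos ((real N - 2 * real k) * \<theta>)" for k
  have "N div 2 = n" using assms by (auto simp: N_def)
  have symmetric: "f (N - k) = f k" if "k \<le> N" for k
  proof -
    have "(real N - 2 * real (N - k)) * \<theta> = - ((real N - 2 * real k) * \<theta>)"
      using that by (simp add: of_nat_diff algebra_simps)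
    then show ?thesis
      using that by (simp only: f_def binomial_symmetric[symmetric] cos_minus)
  qed
  have "(2 * cos \<theta>) ^ N = (\<Sum>k\<le>N. f k)"
    unfolding two_cos_power f_def ..
  also have "\<dots> = (\<Sum>k\<le>n. (if 2 * k = N then 1 else 2) * f k)"
    using sum_atMost_symmetric_fold[of N f, OF symmetric] \<open>N div 2 = n\<close> by simp
  also have "\<dots> = (\<Sum>j\<le>n. (if 2 * (n - j) = N then 1 else 2) * f (n - j))"
    using sum.atLeastAtMost_rev[of _ 0 n] by (simp add: atLeast0AtMost)
  also have "\<dots> = (\<Sum>j\<le>n. neumann_factor (2 * j + p) * real (N choose (n - j)) * cos (real (2 * j + p) * \<theta>))"
    using assms by (intro sum.cong) (auto simp: N_def f_def neumann_factor_def of_nat_diff algebra_simps)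
  finally show ?thesis unfolding N_def .
qed

lemma abs_cheb_T_le_1: "\<bar>cheb_T n x\<bar> \<le> 1"
  by (simp add: cheb_T_def)

lemma two_power_eq_chebyshev_sum:
  assumes "p \<le> 1" and "x \<in> {-1..1}"
  shows "(2 * x) ^ (2 * n + p)
    = (\<Sum>j\<le>n. neumann_factor (2 * j + p) * real ((2 * n + p) choose (n - j)) * cheb_T (2 * j + p) x)"
  using two_cos_power_fold[OF assms(1), of "arccos x" n] assms(2) by (simp add: cheb_T_def cos_arccos)

lemma summable_on_product_majorant:
  fixes w :: "nat \<times> nat \<Rightarrow> real" and p q :: "nat \<Rightarrow> real"
  assumes bound: "\<And>j k. \<bar>w (j, k)\<bar> \<le> p j * q k"
    and p: "summable p" "\<And>j. 0 \<le> p j" and q: "summable q" "\<And>k. 0 \<le> q k"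
  shows "w summable_on UNIV"
proof -
  define M where "M = (\<lambda>(j, k). p j * q k)"
  have q_has_sum: "(q has_sum suminf q) UNIV"
    using q by (intro norm_summable_imp_has_sum) (auto intro: summable_sums)
  have "M summable_on UNIV \<times> UNIV"
  proof (rule summable_on_SigmaI[where g = "\<lambda>j. p j * suminf q"])
    show "((\<lambda>k. M (j, k)) has_sum p j * suminf q) UNIV" for j
      unfolding M_def using has_sum_cmult_right[OF q_has_sum, of "p j"] by simp
    show "(\<lambda>j. p j * suminf q) summable_on UNIV"
      using summable_on_UNIV_nonneg_real_iff[of "\<lambda>j. p j * suminf q"] p q
      by (simp add: summable_mult2 suminf_nonneg)
    show "0 \<le> M (j, k)" for j k
      unfolding M_def using p q by simp
  qed
  then have "(\<lambda>x. norm (M x)) summable_on UNIV"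
    using p(2) q(2) by (simp add: M_def case_prod_unfold abs_mult)
  then have "(\<lambda>x. norm (w x)) summable_on UNIV"
    by (rule Infinite_Sum.abs_summable_on_comparison_test) (use bound p(2) q(2) in \<open>auto simp: M_def abs_mult\<close>)
  then show ?thesis
    by (rule Infinite_Sum.abs_summable_summable)
qed

lemma sums_triangle_swap:
  fixes u :: "nat \<Rightarrow> nat \<Rightarrow> real" and p q B :: "nat \<Rightarrow> real"
  assumes bound: "\<And>j k. \<bar>u (k + j) j\<bar> \<le> p j * q k"
    and p: "summable p" "\<And>j. 0 \<le> p j" and q: "summable q" "\<And>k. 0 \<le> q k"
    and inner: "\<And>j. (\<lambda>k. u (k + j) j) sums B j"
    and outer: "(\<lambda>n. \<Sum>j\<le>n. u n j) sums C"
  shows "B sums C"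
proof -
  define w where "w = (\<lambda>(j, k). u (k + j) j)"
  have "w summable_on UNIV"
    using bound by (intro summable_on_product_majorant[of w p q] p q) (auto simp: w_def)
  then obtain S where w_has_sum: "(w has_sum S) (UNIV \<times> UNIV)"
    by (auto simp: summable_on_def)
  have "((\<lambda>k. w (j, k)) has_sum B j) UNIV" for j
  proof -
    have "summable (\<lambda>k. norm (u (k + j) j))"
      by (rule summable_comparison_test[OF _ summable_mult[OF q(1), of "p j"]]) (use bound in simp)
    then show ?thesis
      unfolding w_def using inner[of j] by (simp add: norm_summable_imp_has_sum)
  qed
  then have "(B has_sum S) UNIV"
    by (intro has_sum_Sigma'[OF w_has_sum]) simp
  moreover have "(w has_sum S) (UNIV \<times> UNIV) \<longleftrightarrow> ((\<lambda>(n, j). u n j) has_sum S) (SIGMA n:UNIV. {..n})"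
    by (rule has_sum_reindex_bij_witness[where j = "\<lambda>(j, k). (k + j, j)" and i = "\<lambda>(n, j). (j, n - j)"])
      (auto simp: w_def)
  then have "((\<lambda>(n, j). u n j) has_sum S) (SIGMA n:UNIV. {..n})"
    using w_has_sum by simp
  then have "((\<lambda>n. \<Sum>j\<le>n. u n j) has_sum S) UNIV"
    by (rule has_sum_Sigma') (simp add: has_sum_finite)
  then have "S = C"
    using outer by (metis has_sum_imp_sums sums_unique2)
  ultimately show ?thesis
    by (simp add: has_sum_imp_sums)
qed

lemma summable_power_div_fact:
  fixes a :: real shows "summable (\<lambda>j. a ^ (2 * j + p) / fact j)"
proof -
  have "a ^ (2 * j + p) / fact j = a ^ p * (inverse (fact j) * (a\<^sup>2) ^ j)" for j
    by (simp add: power_add power_mult divide_inverse)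
  then show ?thesis
    using summable_mult[OF summable_exp[of "a\<^sup>2"], of "a ^ p"] by simp
qed

lemma bessel_J_sums: "(\<lambda>k. (-1) ^ k / (fact k * fact (k + m)) * (t / 2) ^ (2 * k + m)) sums bessel_J m t"
proof -
  have "(\<lambda>k. (-1) ^ k / (fact k * fact (k + m)) * (t / 2) ^ (2 * k + m)) = (\<lambda>k. bessel_coeff m k * t ^ (2 * k + m))"
    by (simp add: bessel_coeff_def power_divide)
  then show ?thesis
    unfolding bessel_J_def using summable_bessel_series by (simp add: summable_sums)
qed

lemma abs_bessel_term_le:
  fixes t :: real
  assumes "j \<le> k + m"
  shows "\<bar>(-1) ^ k / (fact k * fact (k + m)) * (t / 2) ^ (2 * k + m)\<bar>
    \<le> (\<bar>t\<bar> / 2) ^ (2 * k) / fact k * ((\<bar>t\<bar> / 2) ^ m / fact j)"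
proof -
  have "fact j \<le> (fact (k + m) :: real)"
    using assms by (rule fact_mono)
  then have "(\<bar>t\<bar> / 2) ^ (2 * k + m) / (fact k * fact (k + m)) \<le> (\<bar>t\<bar> / 2) ^ (2 * k + m) / (fact k * fact j)"
    by (intro divide_left_mono mult_left_mono) auto
  then show ?thesis
    by (simp add: abs_mult power_abs power_add power_mult)
qed

lemma jacobi_anger_series:
  assumes p: "p \<le> 1" and x: "x \<in> {-1..1}"
    and taylor: "(\<lambda>n. (-1) ^ n / fact (2 * n + p) * (t * x) ^ (2 * n + p)) sums S"
  shows "(\<lambda>j. neumann_factor (2 * j + p) * (-1) ^ j * bessel_J (2 * j + p) t * cheb_T (2 * j + p) x) sums S"
proof -
  define w where "w j = neumann_factor (2 * j + p) * (-1) ^ j * cheb_T (2 * j + p) x" for j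
  \<comment> \<open>u n j is the T(2j+p)-component of the n-th Taylor term; the diagonals n = k + j are Bessel series.\<close>
  define u where "u n j = (-1) ^ n / fact (2 * n + p) * (t / 2) ^ (2 * n + p)
    * (neumann_factor (2 * j + p) * real ((2 * n + p) choose (n - j)) * cheb_T (2 * j + p) x)" for n j
  have u_diagonal: "u (k + j) j = w j * ((-1) ^ k / (fact k * fact (k + (2 * j + p))) * (t / 2) ^ (2 * k + (2 * j + p)))"
    for j k
  proof -
    have "real ((2 * k + (2 * j + p)) choose k) / fact (2 * k + (2 * j + p)) = 1 / (fact k * fact (k + (2 * j + p)))"
      by (simp add: binomial_fact)
    moreover have "2 * (k + j) + p = 2 * k + (2 * j + p)" "k + j - j = k" by simp_all
    ultimately show ?thesis
      by (simp add: u_def w_def power_add field_simps)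
  qed
  have abs_w: "\<bar>w j\<bar> \<le> 2" for j
    using abs_cheb_T_le_1[of "2 * j + p" x]
    by (cases "2 * j + p = 0") (auto simp: w_def neumann_factor_def abs_mult)
  show ?thesis
  proof (rule sums_triangle_swap[where u = u and p = "\<lambda>j. 2 * ((\<bar>t\<bar> / 2) ^ (2 * j + p) / fact j)"
        and q = "\<lambda>k. (\<bar>t\<bar> / 2) ^ (2 * k + 0) / fact k"])
    fix j k
    have "\<bar>u (k + j) j\<bar> \<le> 2 * ((\<bar>t\<bar> / 2) ^ (2 * k) / fact k * ((\<bar>t\<bar> / 2) ^ (2 * j + p) / fact j))"
      unfolding u_diagonal by (subst abs_mult, intro mult_mono abs_w abs_bessel_term_le) auto
    then show "\<bar>u (k + j) j\<bar> \<le> 2 * ((\<bar>t\<bar> / 2) ^ (2 * j + p) / fact j) * ((\<bar>t\<bar> / 2) ^ (2 * k + 0) / fact k)"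
      by (simp only: mult_ac add_0_right)
  next
    fix j
    show "(\<lambda>k. u (k + j) j) sums (neumann_factor (2 * j + p) * (-1) ^ j * bessel_J (2 * j + p) t * cheb_T (2 * j + p) x)"
    proof -
      have "neumann_factor (2 * j + p) * (-1) ^ j * bessel_J (2 * j + p) t * cheb_T (2 * j + p) x
          = w j * bessel_J (2 * j + p) t"
        by (simp add: w_def)
      then show ?thesis
        unfolding u_diagonal by (simp only: sums_mult[OF bessel_J_sums])
    qed
  next
    have "(\<Sum>j\<le>n. u n j) = (-1) ^ n / fact (2 * n + p) * (t * x) ^ (2 * n + p)" for n
    proof -
      have "t * x = t / 2 * (2 * x)" by simp
      then show ?thesis
        unfolding u_def sum_distrib_left[symmetric] two_power_eq_chebyshev_sum[OF p x, symmetric]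
        by (simp only: power_mult_distrib mult.assoc)
    qed
    then show "(\<lambda>n. \<Sum>j\<le>n. u n j) sums S"
      using taylor by simp
  next
    show "summable (\<lambda>j. 2 * ((\<bar>t\<bar> / 2) ^ (2 * j + p) / fact j))"
      by (intro summable_mult summable_power_div_fact)
    show "summable (\<lambda>k. (\<bar>t\<bar> / 2) ^ (2 * k + 0) / fact k)"
      by (rule summable_power_div_fact)
  qed simp_all
qed

section \<open>Truncation error\<close>

lemma mult_ln_div_decrease:
  fixes \<tau> x y :: real
  assumes "0 < \<tau>" "\<tau> \<le> x" "x \<le> y"
  shows "y * ln (\<tau> / y) \<le> x * ln (\<tau> / x) - (y - x)"
proof -
  have pos: "0 < x" "0 < y" using assms by linarith+
  have "ln (x / y) \<le> x / y - 1"
    using pos by (intro ln_le_minus_one) simp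
  then have "y * (ln x - ln y) \<le> x - y"
    using pos by (simp add: ln_div field_simps)
  moreover have "(y - x) * ln \<tau> \<le> (y - x) * ln x"
    using assms by (intro mult_left_mono) auto
  ultimately show ?thesis
    using pos assms(1) by (simp add: ln_div algebra_simps)
qed

lemma r_fun_correct:
  assumes "0 < \<tau>" and "0 < \<eta>" "\<eta> < 1"
  shows "\<tau> < r_fun \<tau> \<eta>" and "(\<tau> / r_fun \<tau> \<eta>) powr r_fun \<tau> \<eta> = \<eta>"
proof -
  define g where "g x = x * ln (\<tau> / x)" for x
  have g_decrease: "g y < g x" if "\<tau> \<le> x" "x < y" for x y
    using mult_ln_div_decrease[OF assms(1) that(1), of y] that by (simp add: g_def)
  have powr_eq: "\<eta> = (\<tau> / x) powr x \<longleftrightarrow> g x = ln \<eta>" if "\<tau> < x" for x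
    using that assms by (auto simp: g_def powr_def)
  \<comment> \<open>g X \<le> g \<tau> - (X - \<tau>) = ln \<eta>, so the root lies in [\<tau>, X].\<close>
  define X where "X = \<tau> - ln \<eta>"
  have "\<tau> < X" using assms by (simp add: X_def)
  have "g X \<le> ln \<eta>"
    using mult_ln_div_decrease[OF assms(1) order_refl, of X] \<open>\<tau> < X\<close> assms(1) by (simp add: g_def X_def)
  moreover have "ln \<eta> \<le> g \<tau>" using assms by (simp add: g_def)
  moreover have "\<forall>x. \<tau> \<le> x \<and> x \<le> X \<longrightarrow> isCont g x"
    using assms(1) unfolding g_def[abs_def] by (intro allI impI continuous_intros) auto
  ultimately obtain r where r: "\<tau> \<le> r" "r \<le> X" "g r = ln \<eta>"
    using IVT2[of g X "ln \<eta>" \<tau>] \<open>\<tau> < X\<close> by auto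
  have "r \<noteq> \<tau>" using r assms by (auto simp: g_def)
  then have "\<tau> < r \<and> \<eta> = (\<tau> / r) powr r"
    using r powr_eq by auto
  moreover have "s = r" if "\<tau> < s \<and> \<eta> = (\<tau> / s) powr s" for s
    using that powr_eq[of s] \<open>\<tau> < r \<and> \<eta> = (\<tau> / r) powr r\<close> r g_decrease[of s r] g_decrease[of r s]
    by (cases s r rule: linorder_cases) auto
  ultimately have "\<tau> < r_fun \<tau> \<eta> \<and> \<eta> = (\<tau> / r_fun \<tau> \<eta>) powr r_fun \<tau> \<eta>"
    unfolding r_fun_def by (rule theI)
  then show "\<tau> < r_fun \<tau> \<eta>" and "(\<tau> / r_fun \<tau> \<eta>) powr r_fun \<tau> \<eta> = \<eta>"
    by auto
qed

lemma one_plus_inverse_power_le_exp_1: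
  assumes "0 < m" shows "(real m + 1) ^ m \<le> real m ^ m * exp 1"
proof -
  have "(real m + 1) ^ m = real m ^ m * (1 + 1 / real m) ^ m"
    using assms by (simp add: field_simps flip: power_mult_distrib)
  also have "\<dots> \<le> real m ^ m * exp 1"
    using assms by (intro mult_left_mono exp_ge_one_plus_x_over_n_power_n) auto
  finally show ?thesis .
qed

lemma exp_2_mult_power_le_fact:
  assumes "2 \<le> m" shows "exp 2 * real m ^ m \<le> 2 * fact m * exp 1 ^ m"
  using assms
proof (induction m rule: dec_induct)
  case base
  show ?case by (simp flip: exp_of_nat_mult)
next
  case (step m)
  have "exp 2 * real (Suc m) ^ Suc m = (real m + 1) * (exp 2 * (real m + 1) ^ m)"
    by (simp add: add.commute mult.left_commute)
  also have "\<dots> \<le> (real m + 1) * (exp 2 * (real m ^ m * exp 1))"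
    using step.hyps(1) by (intro mult_left_mono one_plus_inverse_power_le_exp_1) auto
  also have "\<dots> = exp 1 * (real m + 1) * (exp 2 * real m ^ m)"
    by (simp only: mult_ac)
  also have "\<dots> \<le> exp 1 * (real m + 1) * (2 * fact m * exp 1 ^ m)"
    using step.IH by (intro mult_left_mono) auto
  also have "\<dots> = 2 * fact (Suc m) * exp 1 ^ Suc m"
    by (simp add: algebra_simps)
  finally show ?case .
qed

lemma six_le_exp_2: "6 \<le> exp (2 :: real)"
  using exp_ge_one_plus_x_over_n_power_n[of 10 2] by (simp add: power_divide)

lemma power_div_fact_le_beyond_r:
  fixes a r \<eta> :: real
  assumes a: "0 < a" and r: "exp 1 * a \<le> r" and \<eta>: "(exp 1 * a / r) powr r = \<eta>"
    and m: "2 \<le> m" "r + 2 * real j \<le> real m"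
  shows "a ^ m / fact m \<le> 2 / exp 2 * \<eta> * exp (-2) ^ j"
proof -
  define \<tau> where "\<tau> = exp 1 * a"
  have "0 < \<tau>"
    using a by (simp add: \<tau>_def)
  then have pos: "0 < \<tau>" "0 < r" "0 < real m"
    using r m by (auto simp: \<tau>_def)
  have "exp 2 * real m ^ m * a ^ m \<le> 2 * fact m * exp 1 ^ m * a ^ m"
    using exp_2_mult_power_le_fact[OF m(1)] a by (intro mult_right_mono) auto
  then have "a ^ m / fact m \<le> 2 / exp 2 * (\<tau> / real m) ^ m"
    using pos by (simp add: \<tau>_def power_divide power_mult_distrib field_simps)
  moreover have "(\<tau> / real m) ^ m \<le> \<eta> * exp (-2) ^ j"
  proof -
    have "(\<tau> / real m) ^ m = exp (real m * ln (\<tau> / real m))"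
      using pos by (simp add: exp_of_nat_mult)
    also have "\<dots> \<le> exp (r * ln (\<tau> / r) - (real m - r))"
      using mult_ln_div_decrease[of \<tau> r "real m"] pos r m by (simp add: \<tau>_def)
    also have "\<dots> = \<eta> * exp (- (real m - r))"
      using pos a \<eta> by (simp add: \<tau>_def powr_def exp_diff exp_minus divide_inverse)
    also have "\<dots> \<le> \<eta> * exp (-2) ^ j"
      using m \<eta> by (auto simp: exp_of_nat_mult[symmetric] intro!: mult_left_mono)
    finally show ?thesis .
  qed
  moreover have "0 \<le> 2 / exp (2 :: real)"
    by simp
  ultimately have "a ^ m / fact m \<le> 2 / exp 2 * (\<eta> * exp (-2) ^ j)"
    by (meson order.trans mult_left_mono)
  then show ?thesis
    by (simp only: mult.assoc)
qed

lemma abs_suminf_diff_partial_le_geometric: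
  fixes b :: "nat \<Rightarrow> real"
  assumes "b sums S" and tail: "\<And>j. \<bar>b (j + N)\<bar> \<le> C * q ^ j" and "0 \<le> q" "q < 1"
  shows "\<bar>S - (\<Sum>i<N. b i)\<bar> \<le> C / (1 - q)"
proof -
  have "(\<lambda>j. C * q ^ j) sums (C * (1 / (1 - q)))"
    using assms(3,4) by (intro sums_mult geometric_sums) simp
  then have geometric: "(\<lambda>j. C * q ^ j) sums (C / (1 - q))"
    by simp
  have "(\<lambda>j. b (j + N)) sums (S - (\<Sum>i<N. b i))"
    using assms(1) by (simp add: sums_iff_shift)
  moreover have "summable (\<lambda>j. \<bar>b (j + N)\<bar>)"
    by (rule summable_rabs_comparison_test[OF _ sums_summable[OF geometric]]) (use tail in blast)
  ultimately have "\<bar>S - (\<Sum>i<N. b i)\<bar> \<le> (\<Sum>j. \<bar>b (j + N)\<bar>)"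
    by (metis sums_unique summable_rabs)
  also have "\<dots> \<le> (\<Sum>j. C * q ^ j)"
    by (rule suminf_le[OF tail \<open>summable (\<lambda>j. \<bar>b (j + N)\<bar>)\<close> sums_summable[OF geometric]])
  also have "\<dots> = C / (1 - q)"
    using geometric by (rule sums_unique[symmetric])
  finally show ?thesis .
qed

lemma abs_bessel_J_le_beyond_r_fun:
  fixes t \<eta> :: real
  assumes "t \<noteq> 0" "0 < \<eta>" "\<eta> < 1"
    and "2 \<le> m" "r_fun (exp 1 * \<bar>t\<bar> / 2) \<eta> + 2 * real j \<le> real m"
  shows "\<bar>bessel_J m t\<bar> \<le> 2 / exp 2 * \<eta> * exp (-2) ^ j"
proof -
  define a where "a = \<bar>t\<bar> / 2"
  have a: "0 < a" and \<tau>: "exp 1 * \<bar>t\<bar> / 2 = exp 1 * a"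
    using assms(1) by (simp_all add: a_def)
  have "\<bar>bessel_J m t\<bar> \<le> a ^ m / fact m"
    unfolding a_def by (rule abs_bessel_J_le)
  also have "\<dots> \<le> 2 / exp 2 * \<eta> * exp (-2) ^ j"
    using r_fun_correct[of "exp 1 * a" \<eta>] a assms(2-5) unfolding \<tau>
    by (intro power_div_fact_le_beyond_r) auto
  finally show ?thesis .
qed

lemma bessel_series_truncation_error:
  fixes t \<epsilon> :: real and b :: "nat \<Rightarrow> real" and ord :: "nat \<Rightarrow> nat"
  assumes t: "t \<noteq> 0" and \<epsilon>: "0 < \<epsilon>" "\<epsilon> < 1 / exp 1"
    and N: "r_fun (exp 1 * \<bar>t\<bar> / 2) (5 / 4 * \<epsilon>) \<le> 2 * real N"
    and b: "b sums S" "\<And>j. \<bar>b j\<bar> \<le> 2 * \<bar>bessel_J (ord j) t\<bar>"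
    and ord: "\<And>j. 2 * j \<le> ord j"
  shows "\<bar>S - (\<Sum>j<N. b j)\<bar> \<le> \<epsilon>"
proof -
  define \<eta> where "\<eta> = 5 / 4 * \<epsilon>"
  have "1 / exp 1 \<le> 1 / (2 :: real)"
    using exp_ge_add_one_self[of 1] by (intro divide_left_mono) auto
  then have "\<epsilon> < 1 / 2"
    using \<epsilon>(2) by linarith
  then have \<eta>: "0 < \<eta>" "\<eta> < 1"
    using \<epsilon>(1) by (simp_all add: \<eta>_def)
  have "0 < exp 1 * \<bar>t\<bar> / 2"
    using t by simp
  then have "0 < r_fun (exp 1 * \<bar>t\<bar> / 2) \<eta>"
    using r_fun_correct(1)[of "exp 1 * \<bar>t\<bar> / 2" \<eta>] \<eta> by linarith
  then have "N \<noteq> 0"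
    using N by (auto simp: \<eta>_def)
  have "\<bar>b (j + N)\<bar> \<le> 4 / exp 2 * \<eta> * exp (-2) ^ j" for j
  proof -
    have ord_le: "2 * (j + N) \<le> ord (j + N)"
      by (rule ord)
    then have "2 \<le> ord (j + N)"
      using \<open>N \<noteq> 0\<close> by arith
    have "real (2 * (j + N)) \<le> real (ord (j + N))"
      using ord_le by (rule of_nat_mono)
    then have "r_fun (exp 1 * \<bar>t\<bar> / 2) \<eta> + 2 * real j \<le> real (ord (j + N))"
      using N unfolding \<eta>_def by simp
    with \<open>2 \<le> ord (j + N)\<close> show ?thesis
      using b(2)[of "j + N"] abs_bessel_J_le_beyond_r_fun[OF t \<eta>] by fastforce
  qed
  then have "\<bar>S - (\<Sum>j<N. b j)\<bar> \<le> 4 / exp 2 * \<eta> / (1 - exp (-2))"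
    by (rule abs_suminf_diff_partial_le_geometric[OF b(1)]) auto
  also have "\<dots> = 5 * \<epsilon> / (exp 2 - 1)"
    by (simp add: \<eta>_def exp_minus field_simps)
  also have "\<dots> \<le> \<epsilon>"
    using six_le_exp_2 \<epsilon>(1) by (simp add: divide_le_eq)
  finally show ?thesis .
qed

lemma cos_chebyshev_truncation_error:
  fixes t \<epsilon> x :: real
  assumes "t \<noteq> 0" "0 < \<epsilon>" "\<epsilon> < 1 / exp 1"
    and "r_fun (exp 1 * \<bar>t\<bar> / 2) (5 / 4 * \<epsilon>) \<le> 2 * real (Suc R)" and "x \<in> {-1..1}"
  shows "\<bar>cos (t * x) - (bessel_J 0 t + 2 * (\<Sum>k=1..R. (-1) ^ k * bessel_J (2 * k) t * cheb_T (2 * k) x))\<bar> \<le> \<epsilon>"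
proof -
  define b where "b j = neumann_factor (2 * j) * (-1) ^ j * bessel_J (2 * j) t * cheb_T (2 * j) x" for j
  have "b sums cos (t * x)"
    unfolding b_def[abs_def] using jacobi_anger_series[of 0 x t] cos_paired[of "t * x"] assms(5) by simp
  moreover have "\<bar>b j\<bar> \<le> 2 * \<bar>bessel_J (2 * j) t\<bar>" for j
    using abs_cheb_T_le_1[of "2 * j" x]
    by (auto simp: b_def neumann_factor_def abs_mult intro: mult_le_one order_trans[OF mult_right_le_one_le])
  moreover have "(\<Sum>j<Suc R. b j) = bessel_J 0 t + 2 * (\<Sum>k=1..R. (-1) ^ k * bessel_J (2 * k) t * cheb_T (2 * k) x)"
    by (simp add: b_def neumann_factor_def cheb_T_def sum.lessThan_Suc_shift sum_distrib_left
        sum.atLeast1_atMost_eq mult.assoc del: sum.lessThan_Suc)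
  ultimately show ?thesis
    using bessel_series_truncation_error[OF assms(1-4), of b "cos (t * x)" "\<lambda>j. 2 * j"] by simp
qed

lemma sin_chebyshev_truncation_error:
  fixes t \<epsilon> x :: real
  assumes "t \<noteq> 0" "0 < \<epsilon>" "\<epsilon> < 1 / exp 1"
    and "r_fun (exp 1 * \<bar>t\<bar> / 2) (5 / 4 * \<epsilon>) \<le> 2 * real (Suc R)" and "x \<in> {-1..1}"
  shows "\<bar>sin (t * x) - 2 * (\<Sum>k=0..R. (-1) ^ k * bessel_J (2 * k + 1) t * cheb_T (2 * k + 1) x)\<bar> \<le> \<epsilon>"
proof -
  define b where "b j = 2 * (-1) ^ j * bessel_J (2 * j + 1) t * cheb_T (2 * j + 1) x" for j
  have "b sums sin (t * x)"
    unfolding b_def[abs_def] using jacobi_anger_series[of 1 x t] sin_paired[of "t * x"] assms(5)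
    by (simp add: neumann_factor_def)
  moreover have "\<bar>b j\<bar> \<le> 2 * \<bar>bessel_J (2 * j + 1) t\<bar>" for j
    using abs_cheb_T_le_1[of "2 * j + 1" x]
    by (simp add: b_def abs_mult mult_left_le)
  moreover have "(\<Sum>j<Suc R. b j) = 2 * (\<Sum>k=0..R. (-1) ^ k * bessel_J (2 * k + 1) t * cheb_T (2 * k + 1) x)"
    by (simp add: b_def sum_distrib_left atLeast0AtMost lessThan_Suc_atMost mult.assoc)
  ultimately show ?thesis
    using bessel_series_truncation_error[OF assms(1-4), of b "sin (t * x)" "\<lambda>j. 2 * j + 1"] by simp
qed

lemma le_two_mul_Suc_nat_floor_half:
  fixes r :: real shows "r \<le> 2 * real (Suc (nat \<lfloor>r / 2\<rfloor>))"
proof -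
  have "of_int \<lfloor>r / 2\<rfloor> \<le> real (nat \<lfloor>r / 2\<rfloor>)"
    by (cases "0 \<le> \<lfloor>r / 2\<rfloor>") auto
  moreover have "r / 2 < of_int \<lfloor>r / 2\<rfloor> + 1"
    by linarith
  ultimately show ?thesis
    unfolding of_nat_Suc by argo
qed

theorem mainTheorem16:
  fixes t \<epsilon> :: real and R :: nat
  assumes "t \<noteq> 0" and "0 < \<epsilon>" and "\<epsilon> < 1 / exp 1"
    and "R = nat \<lfloor>r_fun (exp 1 * \<bar>t\<bar> / 2) (5 / 4 * \<epsilon>) / 2\<rfloor>"
  shows "(SUP x\<in>{-1..1}. \<bar>cos (t * x) - (bessel_J 0 t
            + 2 * (\<Sum>k=1..R. (-1) ^ k * bessel_J (2 * k) t * cheb_T (2 * k) x))\<bar>) \<le> \<epsilon> \<and>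
         (SUP x\<in>{-1..1}. \<bar>sin (t * x)
            - 2 * (\<Sum>k=0..R. (-1) ^ k * bessel_J (2 * k + 1) t * cheb_T (2 * k + 1) x)\<bar>) \<le> \<epsilon>"
proof -
  have R: "r_fun (exp 1 * \<bar>t\<bar> / 2) (5 / 4 * \<epsilon>) \<le> 2 * real (Suc R)"
    unfolding assms(4) by (rule le_two_mul_Suc_nat_floor_half)
  show ?thesis
    using cos_chebyshev_truncation_error[OF assms(1-3) R] sin_chebyshev_truncation_error[OF assms(1-3) R]
    by (auto intro!: cSUP_least)
qed

end
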